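(* For disjunctive guarded systems of type $(A,B)$ and every LTL formula without the next operator $h(A,B_1)$: for all $n>2|B|$, if $(A,B)^{(1,n)}\models\mathsf E_{uncond}\,h(A,B_1)$ then $(A,B)^{(1,2|B|)}\models\mathsf E_{uncond}\,h(A,B_1)$.
   Context: A process template is $U=(Q_U,\mathit{init}_U,\Sigma_U,\delta_U)$ with finite states $Q_U$, initial state $\mathit{init}_U$, finite input alphabet $\Sigma_U$ and guarded transitions $\delta_U\subseteq Q_U\times\Sigma_U\times 2^{Q_A\cup Q_B}\times Q_U$; templates $A,B$ have disjoint state sets and disjoint alphabets, and $|B|=|Q_B|$. The system $(A,B)^{(1,n)}$ consists of one copy of $A$ and $n$ copies $B_1,\dots,B_n$ of $B$; a global state $s$ gives each process a local state, a global input $e$ gives each process an input letter, and initially all processes are in their initial states. In a disjunctive system a guard $g$ is satisfied for process $p$ in $s$ iff some process $p'\ne p$ has $s(p')\in g$. A local transition $(q,\sigma,g,q')$ of $p$ is enabled for $(s,e)$ if $s(p)=q$, $e(p)=\sigma$ and $g$ is satisfied for $p$ in $s$; a global step changes the state of exactly one process along an enabled transition. A path is a sequence of configurations $(s_1,e_1,p_1),(s_2,e_2,p_2),\dots$ where $p_t$ makes the step from $s_t$ to $s_{t+1}$ under $e_t$, a configuration $(s,e,\bot)$ occurs (as the last one) exactly when all processes are disabled, and $e_{t+1}(p)=e_t(p)$ for every process $p$ not moving at moment $t$. A run is a maximal path from the initial state. A run is unconditionally fair if it is infinite and every process moves infinitely often. For an LTL formula $h(A,B_1)$ without next operator over atomic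 propositions from $Q_A\cup\Sigma_A$ and $(Q_B\cup\Sigma_B)\times\{1\}$ (interpreted on the local states and inputs of $A$ and $B_1$), $(A,B)^{(1,n)}\models\mathsf E_{uncond}\,h(A,B_1)$ means some unconditionally fair run satisfies $h$. *)

theory Defs
  imports Main
begin

text \<open>Both templates of a system share the HOL types 'q (local states) and 'a (input letters);
  disjointness of the state sets and of the alphabets is assumed explicitly.\<close>

record ('q, 'a) template =
  states :: "'q set"
  init   :: "'q"
  alph   :: "'a set"
  trans  :: "('q \<times> 'a \<times> 'q set \<times> 'q) set"

definition wf_template :: "('q,'a) template \<Rightarrow> 'q set \<Rightarrow> bool" where
  "wf_template U G \<longleftrightarrow> finite (states U) \<and> init U \<in> states U \<and> finite (alph U) \<and>
     trans U \<subseteq> {(q, \<sigma>, g, q'). q \<in> states U \<and> \<sigma> \<in> alph U \<and> g \<subseteq> G \<and> q' \<in> states U}"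

definition wf_pair :: "('q,'a) template \<Rightarrow> ('q,'a) template \<Rightarrow> bool" where
  "wf_pair A B \<longleftrightarrow>
     wf_template A (states A \<union> states B) \<and> wf_template B (states A \<union> states B) \<and>
     states A \<inter> states B = {} \<and> alph A \<inter> alph B = {}"

text \<open>Processes are numbered 0..n: process 0 is the copy of A, process i (1 \<le> i \<le> n) is B_i.
  A global state is a function s :: nat \<Rightarrow> 'q, a global input a function e :: nat \<Rightarrow> 'a;
  only the values on {0..n} are relevant.\<close>

definition tmpl :: "('q,'a) template \<Rightarrow> ('q,'a) template \<Rightarrow> nat \<Rightarrow> ('q,'a) template" where
  "tmpl A B p = (if p = 0 then A else B)"

definition guard_sat :: "nat \<Rightarrow> (nat \<Rightarrow> 'q) \<Rightarrow> nat \<Rightarrow> 'q set \<Rightarrow> bool" where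
  "guard_sat n s p g \<longleftrightarrow> (\<exists>p' \<in> {0..n}. p' \<noteq> p \<and> s p' \<in> g)"

definition enabled ::
  "('q,'a) template \<Rightarrow> ('q,'a) template \<Rightarrow> nat \<Rightarrow> (nat \<Rightarrow> 'q) \<Rightarrow> (nat \<Rightarrow> 'a) \<Rightarrow> nat
     \<Rightarrow> ('q \<times> 'a \<times> 'q set \<times> 'q) \<Rightarrow> bool" where
  "enabled A B n s e p tr \<longleftrightarrow> p \<in> {0..n} \<and> tr \<in> trans (tmpl A B p) \<and>
     (case tr of (q, \<sigma>, g, q') \<Rightarrow> s p = q \<and> e p = \<sigma> \<and> guard_sat n s p g)"

text \<open>Infinite run: an infinite sequence of configurations (s t, e t, pr t) starting in the initial
  state, where process pr t makes a step from s t to s (Suc t) under e t along an enabled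
  transition, no other process changes state, and the inputs of non-moving processes are kept.
  (An infinite path is automatically maximal and never contains the configuration with \<bottom>.)\<close>
definition inf_run ::
  "('q,'a) template \<Rightarrow> ('q,'a) template \<Rightarrow> nat \<Rightarrow>
     (nat \<Rightarrow> nat \<Rightarrow> 'q) \<Rightarrow> (nat \<Rightarrow> nat \<Rightarrow> 'a) \<Rightarrow> (nat \<Rightarrow> nat) \<Rightarrow> bool" where
  "inf_run A B n s e pr \<longleftrightarrow>
     (\<forall>p \<in> {0..n}. s 0 p = init (tmpl A B p)) \<and>
     (\<forall>t. \<forall>p \<in> {0..n}. e t p \<in> alph (tmpl A B p)) \<and>
     (\<forall>t. pr t \<in> {0..n} \<and>
          (\<exists>g. enabled A B n (s t) (e t) (pr t) (s t (pr t), e t (pr t), g, s (Suc t) (pr t))) \<and>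
          (\<forall>p. p \<noteq> pr t \<longrightarrow> s (Suc t) p = s t p \<and> e (Suc t) p = e t p))"

definition uncond_fair :: "nat \<Rightarrow> (nat \<Rightarrow> nat) \<Rightarrow> bool" where
  "uncond_fair n pr \<longleftrightarrow> (\<forall>p \<in> {0..n}. infinite {t. pr t = p})"

datatype ('q, 'a) ap = StA 'q | InA 'a | StB1 'q | InB1 'a

datatype 'p ltlx =
    Prop 'p
  | TrueF
  | NotF "'p ltlx"
  | AndF "'p ltlx" "'p ltlx"
  | UntilF "'p ltlx" "'p ltlx"

fun ltlx_sem :: "(nat \<Rightarrow> 'p set) \<Rightarrow> 'p ltlx \<Rightarrow> bool" where
  "ltlx_sem w (Prop a) = (a \<in> w 0)"
| "ltlx_sem w TrueF = True"
| "ltlx_sem w (NotF \<phi>) = (\<not> ltlx_sem w \<phi>)"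
| "ltlx_sem w (AndF \<phi> \<psi>) = (ltlx_sem w \<phi> \<and> ltlx_sem w \<psi>)"
| "ltlx_sem w (UntilF \<phi> \<psi>) =
     (\<exists>k. ltlx_sem (\<lambda>i. w (i + k)) \<psi> \<and> (\<forall>j<k. ltlx_sem (\<lambda>i. w (i + j)) \<phi>))"

definition label :: "(nat \<Rightarrow> 'q) \<Rightarrow> (nat \<Rightarrow> 'a) \<Rightarrow> ('q,'a) ap set" where
  "label s e = {StA (s 0), InA (e 0), StB1 (s 1), InB1 (e 1)}"

definition E_uncond ::
  "('q,'a) template \<Rightarrow> ('q,'a) template \<Rightarrow> nat \<Rightarrow> ('q,'a) ap ltlx \<Rightarrow> bool" where
  "E_uncond A B n h \<longleftrightarrow>
     (\<exists>s e pr. inf_run A B n s e pr \<and> uncond_fair n pr \<and>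
               ltlx_sem (\<lambda>t. label (s t) (e t)) h)"

end

theory Submission
  imports Defs "HOL-Library.Infinite_Set" "HOL-Combinatorics.Transposition"
begin

text \<open>An unconditionally fair run of \<open>(A,B)\<^bsup>(1,n)\<^esup>\<close> is simulated in
  \<open>(A,B)\<^bsup>(1,2|B|)\<^esup>\<close>. \<open>A\<close> and \<open>B\<^sub>1\<close> are copied, and each of the other \<open>2|B| - 1\<close>
  processes is a token that at every moment plays one of three roles: it holds a state \<open>q\<close> of \<open>B\<close>
  that occurs in the run (shadowing the process that first reaches \<open>q\<close>, and the process that
  last leaves it once \<open>q\<close> is no longer needed), it follows a process, or it pads by following
  \<open>B\<^sub>1\<close>. Holders keep every state of the big system present in the small one, so disjunctive
  guards stay satisfied. A holder of a state that stays needed forever would never move by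
  itself; it swaps roles with a follower whenever that follower leaves the held state, which
  makes every token move infinitely often. Counting shows that \<open>|B|\<close> holders and fewer than
  \<open>|B|\<close> followers suffice.

  Tokens move together with the process they shadow, so several processes move in one step of
  the simulation; sequentializing these batches gives a genuine run whose labelling by \<open>A\<close> and
  \<open>B\<^sub>1\<close> is a stutter sampling of the original one, and LTL without next does not see the
  difference.\<close>

section \<open>Stuttering\<close>

definition stutter_sampling :: "(nat \<Rightarrow> nat) \<Rightarrow> (nat \<Rightarrow> 'b) \<Rightarrow> (nat \<Rightarrow> 'b) \<Rightarrow> bool" where
  "stutter_sampling \<psi> w w' \<longleftrightarrow> mono \<psi> \<and> \<psi> 0 = 0 \<and> (\<forall>u. \<exists>i. u < \<psi> i) \<and>
     (\<forall>i. w' i = w (\<psi> i)) \<and> (\<forall>i u. \<psi> i \<le> u \<and> u < \<psi> (Suc i) \<longrightarrow> w u = w (\<psi> i))"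

lemma stutter_samplingI:
  assumes "mono \<psi>" "\<psi> 0 = 0" "\<And>u. \<exists>i. u < \<psi> i" "\<And>i. w' i = w (\<psi> i)"
    and "\<And>i u. \<psi> i \<le> u \<Longrightarrow> u < \<psi> (Suc i) \<Longrightarrow> w u = w (\<psi> i)"
  shows "stutter_sampling \<psi> w w'"
  using assms unfolding stutter_sampling_def by blast

lemma stutter_samplingD:
  assumes "stutter_sampling \<psi> w w'"
  shows "mono \<psi>" "\<psi> 0 = 0" "\<exists>i. u < \<psi> i" "w' i = w (\<psi> i)"
    and "\<psi> i \<le> u \<Longrightarrow> u < \<psi> (Suc i) \<Longrightarrow> w u = w (\<psi> i)"
  using assms unfolding stutter_sampling_def by auto

lemma stutter_sampling_block:
  assumes "stutter_sampling \<psi> w w'"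
  obtains j where "\<psi> j \<le> u" "u < \<psi> (Suc j)"
proof -
  obtain i where "u < \<psi> i" using stutter_samplingD(3)[OF assms] by blast
  moreover have "\<not> u < \<psi> 0" using stutter_samplingD(2)[OF assms] by simp
  ultimately obtain k where "\<forall>i\<le>k. \<not> u < \<psi> i" "u < \<psi> (Suc k)"
    using ex_least_nat_less[of "\<lambda>i. u < \<psi> i"] by auto
  then show thesis using that[of k] by (simp add: not_less)
qed

lemma stutter_sampling_suffix:
  assumes st: "stutter_sampling \<psi> w w'" and u: "\<psi> j \<le> u" "u < \<psi> (Suc j) \<or> u = \<psi> j"
  shows "stutter_sampling (\<lambda>x. if x = 0 then 0 else \<psi> (x + j) - u) (\<lambda>i. w (i + u)) (\<lambda>i. w' (i + j))"
    (is "stutter_sampling ?\<phi> _ _")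
proof -
  note m = stutter_samplingD(1)[OF st] and blk = stutter_samplingD(5)[OF st]
  have ge: "u \<le> \<psi> (x + j)" if "x \<ge> 1" for x
    using u monoD[OF m, of "Suc j" "x + j"] monoD[OF m, of j "Suc j"] that by auto
  have wu: "w u = w (\<psi> j)" using u blk[of j u] by auto
  show ?thesis
  proof (rule stutter_samplingI)
    show "mono ?\<phi>"
      by (rule monoI) (simp add: monoD[OF m] diff_le_mono)
    show "w' (i + j) = w (?\<phi> i + u)" for i
      using stutter_samplingD(4)[OF st] wu ge[of i] by (cases "i = 0") simp_all
    show "w (v + u) = w (?\<phi> i + u)" if v: "?\<phi> i \<le> v" "v < ?\<phi> (Suc i)" for i v
    proof (cases "i = 0")
      case True
      then have "v + u < \<psi> (Suc j)" using v ge[of 1] by simp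
      then have "w (v + u) = w (\<psi> j)" using u(1) by (intro blk) simp_all
      then show ?thesis using True wu by simp
    next
      case False
      then have "\<psi> (i + j) \<le> v + u" "v + u < \<psi> (Suc (i + j))"
        using v ge[of i] ge[of "Suc i"] by simp_all
      then have "w (v + u) = w (\<psi> (i + j))" by (rule blk)
      then show ?thesis using False ge[of i] by simp
    qed
    show "\<exists>i. v < ?\<phi> i" for v
    proof -
      obtain i where "v + u < \<psi> i" using stutter_samplingD(3)[OF st] by blast
      moreover have "\<psi> i \<le> \<psi> (i + 1 + j)" by (rule monoD[OF m]) simp
      ultimately show ?thesis by (intro exI[of _ "i + 1"]) simp
    qed
  qed simp
qed

context
  fixes \<psi> :: "nat \<Rightarrow> nat" and w w' :: "nat \<Rightarrow> 'b" and f1 f2 :: "(nat \<Rightarrow> 'b) \<Rightarrow> bool"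
  assumes st: "stutter_sampling \<psi> w w'"
    and suffix: "\<And>j u. \<psi> j \<le> u \<Longrightarrow> u < \<psi> (Suc j) \<or> u = \<psi> j \<Longrightarrow>
      (f1 (\<lambda>i. w' (i + j)) \<longleftrightarrow> f1 (\<lambda>i. w (i + u))) \<and> (f2 (\<lambda>i. w' (i + j)) \<longleftrightarrow> f2 (\<lambda>i. w (i + u)))"
begin

lemma until_stutter_sampling_down:
  assumes k2: "f2 (\<lambda>i. w' (i + k))" and k1: "\<forall>j<k. f1 (\<lambda>i. w' (i + j))"
  shows "\<exists>k. f2 (\<lambda>i. w (i + k)) \<and> (\<forall>j<k. f1 (\<lambda>i. w (i + j)))"
proof (intro exI conjI allI impI)
  show "f2 (\<lambda>i. w (i + \<psi> k))" using suffix[of k "\<psi> k"] k2 by simp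
  fix v assume v: "v < \<psi> k"
  obtain j where j: "\<psi> j \<le> v" "v < \<psi> (Suc j)" using stutter_sampling_block[OF st] by blast
  have "j < k" using j v monoD[OF stutter_samplingD(1)[OF st], of k j] by (cases "j < k") auto
  then show "f1 (\<lambda>i. w (i + v))" using suffix[of j v] j k1 by simp
qed

lemma until_stutter_sampling_up:
  assumes v2: "f2 (\<lambda>i. w (i + v))" and v1: "\<forall>j<v. f1 (\<lambda>i. w (i + j))"
  shows "\<exists>k. f2 (\<lambda>i. w' (i + k)) \<and> (\<forall>j<k. f1 (\<lambda>i. w' (i + j)))"
proof -
  txt \<open>The first sample point whose block reaches \<open>v\<close>; all earlier samples lie strictly before \<open>v\<close>.\<close>
  define k where "k = (LEAST j. v \<le> \<psi> j \<or> v < \<psi> (Suc j))"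
  obtain j0 where "\<psi> j0 \<le> v" "v < \<psi> (Suc j0)" using stutter_sampling_block[OF st] by blast
  then have "v \<le> \<psi> j0 \<or> v < \<psi> (Suc j0)" by simp
  then have k: "v \<le> \<psi> k \<or> v < \<psi> (Suc k)" unfolding k_def by (rule LeastI)
  have before: "\<psi> j < v \<and> \<psi> (Suc j) \<le> v" if "j < k" for j
    using not_less_Least[OF that[unfolded k_def]] by (simp add: k_def not_le)
  have "\<psi> k \<le> v" using stutter_samplingD(2)[OF st] before[of "k - 1"] by (cases k) auto
  then have "f2 (\<lambda>i. w' (i + k))" using suffix[of k v] k v2 by auto
  moreover have "f1 (\<lambda>i. w' (i + j))" if "j < k" for j
    using suffix[of j "\<psi> j"] v1 before[OF that] by simp
  ultimately show ?thesis by auto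
qed

end

lemma ltlx_sem_stutter_sampling:
  "stutter_sampling \<psi> w w' \<Longrightarrow> ltlx_sem w' \<phi> = ltlx_sem w \<phi>"
proof (induction \<phi> arbitrary: \<psi> w w')
  case (Prop a)
  then show ?case using stutter_samplingD(2,4)[OF Prop.prems] by simp
next
  case (UntilF \<phi>1 \<phi>2)
  have "(ltlx_sem (\<lambda>i. w' (i + j)) \<phi>1 \<longleftrightarrow> ltlx_sem (\<lambda>i. w (i + u)) \<phi>1) \<and>
      (ltlx_sem (\<lambda>i. w' (i + j)) \<phi>2 \<longleftrightarrow> ltlx_sem (\<lambda>i. w (i + u)) \<phi>2)"
    if "\<psi> j \<le> u" "u < \<psi> (Suc j) \<or> u = \<psi> j" for j u
    using UntilF.IH[OF stutter_sampling_suffix[OF UntilF.prems that]] by simp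
  from until_stutter_sampling_down[OF UntilF.prems this]
    until_stutter_sampling_up[OF UntilF.prems this]
  show ?case by auto
qed simp_all

section \<open>Sequentializing batched runs\<close>

lemma nat_step_const_interval:
  assumes "\<And>v. a \<le> v \<Longrightarrow> Suc v < b \<Longrightarrow> f (Suc v) = f v" and "a \<le> u" "u < b"
  shows "f u = f a"
  using assms(2,3)
proof (induction u rule: dec_induct)
  case (step v)
  then show ?case using assms(1)[of v] by simp
qed simp

text \<open>In a batched run, in every batch \<open>t\<close> the processes \<open>j\<close> with \<open>moves t j\<close> take one step
  each, in increasing order of \<open>j\<close>: the guard of a mover is evaluated in the configuration in
  which the smaller movers of the batch have already moved.\<close>

locale batched_run =
  fixes A B :: "('q,'a) template" and N :: nat
    and X :: "nat \<Rightarrow> nat \<Rightarrow> 'q" and Y :: "nat \<Rightarrow> nat \<Rightarrow> 'a" and moves :: "nat \<Rightarrow> nat \<Rightarrow> bool"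
  assumes frame: "\<not> moves t j \<Longrightarrow> X j (Suc t) = X j t \<and> Y j (Suc t) = Y j t"
    and moves_le: "moves t j \<Longrightarrow> j \<le> N"
    and moves_often: "j \<le> N \<Longrightarrow> \<exists>\<^sub>\<infinity>t. moves t j"
    and moves_step: "moves t j \<Longrightarrow> \<exists>g. (X j t, Y j t, g, X j (Suc t)) \<in> trans (tmpl A B j) \<and>
      guard_sat N (\<lambda>i. if moves t i \<and> i < j then X i (Suc t) else X i t) j g"
    and init: "j \<le> N \<Longrightarrow> X j 0 = init (tmpl A B j)"
    and alph: "j \<le> N \<Longrightarrow> Y j t \<in> alph (tmpl A B j)"
    and A_B1_not_both: "moves t 0 \<Longrightarrow> \<not> moves t 1"
    and B1_exists: "1 \<le> N"
begin

text \<open>Step \<open>m = t * batch_len + j\<close> of the interleaving is the turn of process \<open>j\<close> in batch \<open>t\<close>;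
  \<open>interleaved F m\<close> is the value of \<open>F\<close> just before that turn.\<close>

definition batch_len :: nat where "batch_len = Suc N"

definition interleaved :: "(nat \<Rightarrow> nat \<Rightarrow> 'x) \<Rightarrow> nat \<Rightarrow> nat \<Rightarrow> 'x" where
  "interleaved F m j = (if moves (m div batch_len) j \<and> j < m mod batch_len
     then F j (Suc (m div batch_len)) else F j (m div batch_len))"

definition move_steps :: "nat set" where
  "move_steps = {m. moves (m div batch_len) (m mod batch_len)}"

definition move_step :: "nat \<Rightarrow> nat" where "move_step = enumerate move_steps"

lemma batch_len_pos: "0 < batch_len" by (simp add: batch_len_def)

lemma frame_X: "\<not> moves t j \<Longrightarrow> X j (Suc t) = X j t" and frame_Y: "\<not> moves t j \<Longrightarrow> Y j (Suc t) = Y j t"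
  using frame by simp_all

lemma mover_less_batch_len: "moves t j \<Longrightarrow> j < batch_len"
  using moves_le by (simp add: batch_len_def less_Suc_eq_le)

lemma move_steps_code: "moves t j \<Longrightarrow> t * batch_len + j \<in> move_steps"
  using mover_less_batch_len[of t j] by (simp add: move_steps_def)

lemma infinite_move_steps: "infinite move_steps"
proof -
  have "(\<lambda>t. t * batch_len) ` {t. moves t 0} \<subseteq> move_steps"
    using move_steps_code[of _ 0] by auto
  moreover have "inj (\<lambda>t. t * batch_len)" by (rule injI) (use batch_len_pos in simp)
  then have "infinite ((\<lambda>t. t * batch_len) ` {t. moves t 0})"
    using moves_often[of 0] by (simp add: INFM_iff_infinite finite_image_iff inj_on_subset)
  ultimately show ?thesis by (rule infinite_super)
qed

lemma move_step_in: "move_step i \<in> move_steps"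
  unfolding move_step_def using enumerate_in_set[OF infinite_move_steps] .

lemma move_step_less_iff [simp]: "move_step i < move_step j \<longleftrightarrow> i < j"
  unfolding move_step_def using infinite_move_steps by simp

lemma move_step_le_iff [simp]: "move_step i \<le> move_step j \<longleftrightarrow> i \<le> j"
  unfolding move_step_def using infinite_move_steps by simp

lemma move_step_surj: "m \<in> move_steps \<Longrightarrow> \<exists>i. move_step i = m"
  unfolding move_step_def using enumerate_Ex[OF infinite_move_steps] by blast

lemma le_move_step: "i \<le> move_step i"
  unfolding move_step_def using le_enumerate[OF infinite_move_steps] .

lemma not_move_step_between: "m < move_step (Suc i) \<Longrightarrow> move_step i < m \<Longrightarrow> m \<notin> move_steps"
  using move_step_surj by fastforce

lemma not_move_step_before: "m < move_step 0 \<Longrightarrow> m \<notin> move_steps"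
  using move_step_surj by fastforce

lemma Suc_div_mod_batch_len:
  obtains "Suc m div batch_len = m div batch_len" "Suc m mod batch_len = Suc (m mod batch_len)"
  | "Suc m div batch_len = Suc (m div batch_len)" "Suc m mod batch_len = 0" "m mod batch_len = N"
proof -
  have "m mod batch_len < batch_len" using batch_len_pos by simp
  then show thesis using that by (cases "Suc (m mod batch_len) = batch_len")
    (auto simp: mod_Suc div_Suc batch_len_def)
qed

text \<open>The batch whose labelling is seen at interleaving step \<open>m\<close>: the next one as soon as
  \<open>A\<close> or \<open>B\<^sub>1\<close> has moved in the current batch. This is well defined because \<open>A\<close> and \<open>B\<^sub>1\<close>
  never move in the same batch.\<close>

definition batch_of :: "nat \<Rightarrow> nat" where
  "batch_of m = m div batch_len + (if (moves (m div batch_len) 0 \<and> 0 < m mod batch_len) \<or>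
     (moves (m div batch_len) 1 \<and> 1 < m mod batch_len) then 1 else 0)"

definition seq_state :: "nat \<Rightarrow> nat \<Rightarrow> 'q" where "seq_state i = interleaved X (move_step i)"
definition seq_input :: "nat \<Rightarrow> nat \<Rightarrow> 'a" where "seq_input i = interleaved Y (move_step i)"
definition seq_proc :: "nat \<Rightarrow> nat" where "seq_proc i = move_step i mod batch_len"

context
  fixes F :: "nat \<Rightarrow> nat \<Rightarrow> 'x"
  assumes frame_F: "\<And>t j. \<not> moves t j \<Longrightarrow> F j (Suc t) = F j t"
begin

lemma interleaved_Suc: "interleaved F (Suc m) = (if m \<in> move_steps
    then (interleaved F m)(m mod batch_len := F (m mod batch_len) (Suc (m div batch_len)))
    else interleaved F m)"
proof
  fix j
  have ev: "m \<in> move_steps \<longleftrightarrow> moves (m div batch_len) (m mod batch_len)"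
    by (simp add: move_steps_def)
  have fr: "\<not> moves (m div batch_len) j \<Longrightarrow> F j (Suc (m div batch_len)) = F j (m div batch_len)"
    using frame_F by blast
  show "interleaved F (Suc m) j = (if m \<in> move_steps
      then (interleaved F m)(m mod batch_len := F (m mod batch_len) (Suc (m div batch_len)))
      else interleaved F m) j"
  proof (cases rule: Suc_div_mod_batch_len[of m])
    case 1
    then show ?thesis unfolding interleaved_def ev
      using fr by (cases "j = m mod batch_len"; cases "moves (m div batch_len) j")
        (simp_all add: less_Suc_eq)
  next
    case 2
    then show ?thesis unfolding interleaved_def ev
      using fr moves_le[of "m div batch_len" j]
        by (cases "j = m mod batch_len"; cases "moves (m div batch_len) j") auto
  qed
qed

lemma interleaved_const:
  "a \<le> b \<Longrightarrow> (\<And>m. a \<le> m \<Longrightarrow> m < b \<Longrightarrow> m \<notin> move_steps) \<Longrightarrow> interleaved F b = interleaved F a"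
  by (induction b rule: dec_induct) (simp_all add: interleaved_Suc)

lemma interleaved_move_step_0: "interleaved F (move_step 0) = (\<lambda>j. F j 0)"
proof -
  have "interleaved F (move_step 0) = interleaved F 0" using not_move_step_before
    by (intro interleaved_const) auto
  then show ?thesis by (simp add: interleaved_def fun_eq_iff)
qed

lemma interleaved_move_step_Suc:
  "interleaved F (move_step (Suc i)) = interleaved F (Suc (move_step i))"
  using not_move_step_between[of _ i] by (intro interleaved_const) (auto simp: Suc_le_eq)

lemma interleaved_A_B1: "j \<le> 1 \<Longrightarrow> interleaved F m j = F j (batch_of m)"
proof -
  assume "j \<le> 1"
  then have "j = 0 \<or> j = 1" by auto
  then show ?thesis
    using A_B1_not_both[of "m div batch_len"]
      frame_F[of "m div batch_len" 0] frame_F[of "m div batch_len" 1]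
    by (elim disjE) (auto simp: interleaved_def batch_of_def)
qed

lemma interleaved_move_step_Suc_upd: "interleaved F (move_step (Suc i)) =
    (interleaved F (move_step i))(seq_proc i := F (seq_proc i) (Suc (move_step i div batch_len)))"
  using interleaved_move_step_Suc interleaved_Suc move_step_in[of i] by (simp add: seq_proc_def)

end

lemma seq_proc_moves: "moves (move_step i div batch_len) (seq_proc i)"
  using move_step_in[of i] unfolding move_steps_def seq_proc_def by simp

lemma seq_step_enabled: "\<exists>g. enabled A B N (seq_state i) (seq_input i) (seq_proc i)
    (seq_state i (seq_proc i), seq_input i (seq_proc i), g, seq_state (Suc i) (seq_proc i))"
proof -
  define t where "t = move_step i div batch_len"
  define k where "k = seq_proc i"
  have mk: "moves t k" using seq_proc_moves unfolding t_def k_def .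
  obtain g where g: "(X k t, Y k t, g, X k (Suc t)) \<in> trans (tmpl A B k)"
      "guard_sat N (\<lambda>i. if moves t i \<and> i < k then X i (Suc t) else X i t) k g"
    using moves_step[OF mk] by blast
  have "(\<lambda>j. if moves t j \<and> j < k then X j (Suc t) else X j t) = seq_state i"
    unfolding seq_state_def t_def k_def seq_proc_def by (rule ext) (simp add: interleaved_def)
  moreover have "seq_state i k = X k t" "seq_input i k = Y k t"
    unfolding seq_state_def seq_input_def t_def k_def seq_proc_def
      by (simp_all add: interleaved_def)
  moreover have "seq_state (Suc i) k = X k (Suc t)"
    using interleaved_move_step_Suc_upd[where F = X, OF frame_X, of i]
      unfolding seq_state_def t_def k_def by simp
  ultimately have "enabled A B N (seq_state i) (seq_input i) k
      (seq_state i k, seq_input i k, g, seq_state (Suc i) k)"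
    unfolding enabled_def using g moves_le[OF mk] by simp
  then show ?thesis unfolding k_def by blast
qed

lemma seq_run: "inf_run A B N seq_state seq_input seq_proc"
proof -
  have "seq_state 0 p = init (tmpl A B p)" if "p \<le> N" for p
    using init[OF that] interleaved_move_step_0[where F = X, OF frame_X]
      by (simp add: seq_state_def)
  moreover have "seq_input t p \<in> alph (tmpl A B p)" if "p \<le> N" for t p
    using alph[OF that] by (simp add: seq_input_def interleaved_def)
  moreover have "seq_proc i \<in> {0..N}" for i using moves_le[OF seq_proc_moves] by simp
  moreover have "seq_state (Suc i) p = seq_state i p \<and> seq_input (Suc i) p = seq_input i p"
    if "p \<noteq> seq_proc i" for i p
    using that interleaved_move_step_Suc_upd[where F = X, OF frame_X, of i]
      interleaved_move_step_Suc_upd[where F = Y, OF frame_Y, of i]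
    by (simp add: seq_state_def seq_input_def)
  ultimately show ?thesis using seq_step_enabled unfolding inf_run_def by simp
qed

lemma seq_fair: "uncond_fair N seq_proc"
  unfolding uncond_fair_def
proof
  fix j assume j: "j \<in> {0..N}"
  have "\<exists>i\<ge>i0. seq_proc i = j" for i0
  proof -
    obtain t where t: "t \<ge> move_step i0" "moves t j"
      using moves_often[of j] j by (auto simp: INFM_nat_le)
    obtain i where i: "move_step i = t * batch_len + j"
      using move_step_surj[OF move_steps_code[OF t(2)]] by blast
    have "t \<le> t * batch_len" using batch_len_pos by simp
    then have "move_step i0 \<le> move_step i" using t(1) i by linarith
    then have "i0 \<le> i" by simp
    moreover have "seq_proc i = j" unfolding seq_proc_def i using mover_less_batch_len[OF t(2)]
      by simp
    ultimately show ?thesis by blast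
  qed
  then show "infinite {i. seq_proc i = j}"
    by (simp add: infinite_nat_iff_unbounded_le)
qed

definition batch_word :: "nat \<Rightarrow> ('q,'a) ap set" where
  "batch_word t = label (\<lambda>j. X j t) (\<lambda>j. Y j t)"

lemma label_interleaved: "label (interleaved X m) (interleaved Y m) = batch_word (batch_of m)"
  using interleaved_A_B1[where F = X, OF frame_X] interleaved_A_B1[where F = Y, OF frame_Y]
  by (simp add: label_def batch_word_def)

lemma batch_of_mono: "mono batch_of"
proof
  fix m m' :: nat assume le: "m \<le> m'"
  show "batch_of m \<le> batch_of m'"
  proof (cases "m div batch_len = m' div batch_len")
    case True
    then have "m mod batch_len \<le> m' mod batch_len"
      using le by (metis add_le_cancel_left div_mult_mod_eq)
    then show ?thesis using True unfolding batch_of_def by auto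
  next
    case False
    then have "m div batch_len < m' div batch_len" using div_le_mono[OF le, of batch_len] by simp
    then show ?thesis unfolding batch_of_def by auto
  qed
qed

definition sample :: "nat \<Rightarrow> nat" where
  "sample i = (case i of 0 \<Rightarrow> 0 | Suc i' \<Rightarrow> batch_of (Suc (move_step i')))"

lemma sample_mono: "mono sample"
proof (rule mono_iff_le_Suc[THEN iffD2], intro allI)
  fix i show "sample i \<le> sample (Suc i)"
    using monoD[OF batch_of_mono, of "Suc (move_step (i - 1))" "Suc (move_step i)"]
    by (cases i) (simp_all add: sample_def)
qed

lemma label_seq: "label (seq_state i) (seq_input i) = batch_word (sample i)"
proof (cases i)
  case 0
  then show ?thesis using label_interleaved[of 0]
    by (simp add: sample_def seq_state_def seq_input_def batch_word_def
      interleaved_move_step_0[where F = X, OF frame_X]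
      interleaved_move_step_0[where F = Y, OF frame_Y])
next
  case (Suc i')
  then show ?thesis using label_interleaved[of "Suc (move_step i')"]
    by (simp add: sample_def seq_state_def seq_input_def
      interleaved_move_step_Suc[where F = X, OF frame_X]
      interleaved_move_step_Suc[where F = Y, OF frame_Y])
qed

lemma sample_hits_move: "moves t j \<Longrightarrow> j \<le> 1 \<Longrightarrow> \<exists>i. sample (Suc i) = Suc t"
proof -
  assume a: "moves t j" "j \<le> 1"
  obtain i where i: "move_step i = t * batch_len + j"
    using move_step_surj[OF move_steps_code[OF a(1)]] by blast
  have "j < batch_len" using mover_less_batch_len[OF a(1)] .
  then have tj: "move_step i div batch_len = t" "move_step i mod batch_len = j"
    using i by simp_all
  have "batch_of (Suc (move_step i)) = Suc t"
  proof (cases rule: Suc_div_mod_batch_len[of "move_step i"])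
    case 1
    have "j = 0 \<or> j = 1" using a(2) by auto
    then show ?thesis using 1 tj a(1) A_B1_not_both[of t] by (auto simp: batch_of_def)
  qed (simp add: batch_of_def tj)
  then have "sample (Suc i) = Suc t" by (simp add: sample_def)
  then show ?thesis ..
qed

lemma batch_word_const_block:
  assumes "sample i \<le> u" "u < sample (Suc i)"
  shows "batch_word u = batch_word (sample i)"
proof (rule nat_step_const_interval[OF _ assms])
  fix v assume v: "sample i \<le> v" "Suc v < sample (Suc i)"
  txt \<open>A change of the labelling needs a move of \<open>A\<close> or \<open>B\<^sub>1\<close>, which starts a new block.\<close>
  have "\<not> moves v j" if j: "j \<le> 1" for j
  proof
    assume "moves v j"
    then obtain i' where i': "sample (Suc i') = Suc v" using sample_hits_move j by blast
    consider "Suc i' \<le> i" | "Suc i \<le> Suc i'" by linarith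
    then show False
    proof cases
      case 1
      then show False using monoD[OF sample_mono 1] i' v by simp
    next
      case 2
      then show False using monoD[OF sample_mono 2] i' v by simp
    qed
  qed
  then have "X j (Suc v) = X j v \<and> Y j (Suc v) = Y j v" if "j \<le> 1" for j
    using frame that by blast
  then show "batch_word (Suc v) = batch_word v"
    unfolding batch_word_def label_def by simp
qed

lemma sample_unbounded: "\<exists>i. u < sample i"
proof -
  define i where "i = Suc u * batch_len"
  have "Suc u = i div batch_len" unfolding i_def using batch_len_pos by simp
  also have "\<dots> \<le> Suc (move_step i) div batch_len" using le_move_step[of i]
    by (simp add: div_le_mono)
  also have "\<dots> \<le> sample (Suc i)" by (simp add: sample_def batch_of_def)
  finally show ?thesis by (intro exI[of _ "Suc i"]) simp
qed

theorem sequential_run: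
  "\<exists>s e pr \<psi>. inf_run A B N s e pr \<and> uncond_fair N pr \<and>
     stutter_sampling \<psi> (\<lambda>t. label (\<lambda>j. X j t) (\<lambda>j. Y j t)) (\<lambda>i. label (s i) (e i))"
proof -
  have "stutter_sampling sample batch_word (\<lambda>i. label (seq_state i) (seq_input i))"
  proof (rule stutter_samplingI)
    show "sample 0 = 0" by (simp add: sample_def)
    show "batch_word u = batch_word (sample i)" if "sample i \<le> u" "u < sample (Suc i)" for i u
      using that by (rule batch_word_const_block)
  qed (fact sample_mono sample_unbounded label_seq)+
  moreover have "batch_word = (\<lambda>t. label (\<lambda>j. X j t) (\<lambda>j. Y j t))"
    by (simp add: fun_eq_iff batch_word_def)
  ultimately show ?thesis using seq_run seq_fair by metis
qed

end

section \<open>Anatomy of a fair run\<close>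

text \<open>The roles of a token: holding a state, following a process, or padding (following \<open>B\<^sub>1\<close>).\<close>

datatype 'q slot = Hold 'q | Follow nat | Pad nat

locale fair_run =
  fixes A B :: "('q,'a) template" and n :: nat
    and s :: "nat \<Rightarrow> nat \<Rightarrow> 'q" and e :: "nat \<Rightarrow> nat \<Rightarrow> 'a" and pr :: "nat \<Rightarrow> nat"
  assumes wf: "wf_pair A B" and run: "inf_run A B n s e pr" and fair: "uncond_fair n pr"
    and n_pos: "1 \<le> n"
begin

lemma run_step:
  "(\<exists>g. enabled A B n (s t) (e t) (pr t) (s t (pr t), e t (pr t), g, s (Suc t) (pr t))) \<and>
    (\<forall>p. p \<noteq> pr t \<longrightarrow> s (Suc t) p = s t p \<and> e (Suc t) p = e t p)"
  using run[unfolded inf_run_def, THEN conjunct2, THEN conjunct2, THEN spec, of t] by simp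

lemma frame_s: "p \<noteq> pr t \<Longrightarrow> s (Suc t) p = s t p" using run_step by blast
lemma frame_e: "p \<noteq> pr t \<Longrightarrow> e (Suc t) p = e t p" using run_step by blast
lemma s_init: "p \<le> n \<Longrightarrow> s 0 p = init (tmpl A B p)" using run unfolding inf_run_def by simp
lemma e_alph: "p \<le> n \<Longrightarrow> e t p \<in> alph (tmpl A B p)" using run unfolding inf_run_def by simp

lemma step_trans: "\<exists>g. (s t (pr t), e t (pr t), g, s (Suc t) (pr t)) \<in> trans (tmpl A B (pr t)) \<and>
    guard_sat n (s t) (pr t) g"
  using run_step unfolding enabled_def by auto

lemma moves_often: "p \<le> n \<Longrightarrow> \<exists>\<^sub>\<infinity>t. pr t = p"
  using fair unfolding uncond_fair_def INFM_iff_infinite by auto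

lemma finite_states_B: "finite (states B)" and init_B_in_states: "init B \<in> states B"
  using wf unfolding wf_pair_def wf_template_def by auto

lemma s_in_states_B: "p \<in> {1..n} \<Longrightarrow> s t p \<in> states B"
proof (induction t)
  case 0
  then show ?case using s_init init_B_in_states by (simp add: tmpl_def)
next
  case (Suc t)
  show ?case
  proof (cases "p = pr t")
    case True
    obtain g where "(s t (pr t), e t (pr t), g, s (Suc t) (pr t)) \<in> trans (tmpl A B (pr t))"
      using step_trans by blast
    moreover have "trans B \<subseteq> {(q, \<sigma>, g, q'). q \<in> states B \<and> \<sigma> \<in> alph B \<and>
        g \<subseteq> states A \<union> states B \<and> q' \<in> states B}"
      using wf unfolding wf_pair_def wf_template_def by blast
    ultimately show ?thesis using True Suc.prems by (auto simp: tmpl_def)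
  next
    case False
    then show ?thesis using Suc frame_s by simp
  qed
qed

lemma s_unchanged:
  assumes "t0 \<le> t1" "\<And>u. t0 \<le> u \<Longrightarrow> u < t1 \<Longrightarrow> pr u \<noteq> p"
  shows "s t1 p = s t0 p"
  using assms
proof (induction t1 rule: dec_induct)
  case (step m)
  have "pr u \<noteq> p" if "t0 \<le> u" "u < m" for u using step.prems that by simp
  then have "s m p = s t0 p" by (rule step.IH)
  moreover have "pr m \<noteq> p" using step.prems step.hyps by simp
  ultimately show ?case using frame_s[of p m] by simp
qed simp

lemma next_move:
  assumes "p \<le> n"
  obtains t where "t0 \<le> t" "pr t = p" "\<And>u. t0 \<le> u \<Longrightarrow> u < t \<Longrightarrow> pr u \<noteq> p"
proof -
  obtain t' where "t0 \<le> t' \<and> pr t' = p" using moves_often[OF assms] by (auto simp: INFM_nat_le)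
  define t where "t = (LEAST t. t0 \<le> t \<and> pr t = p)"
  have "t0 \<le> t \<and> pr t = p" unfolding t_def by (rule LeastI) fact
  moreover have "pr u \<noteq> p" if "t0 \<le> u" "u < t" for u
    using not_less_Least[of u "\<lambda>t. t0 \<le> t \<and> pr t = p"] that unfolding t_def by blast
  ultimately show thesis using that by blast
qed

definition revisits :: "nat \<Rightarrow> 'q \<Rightarrow> bool" where
  "revisits p q \<longleftrightarrow> (\<exists>\<^sub>\<infinity>t. pr t = p \<and> s t p = q)"

lemma revisitsI:
  assumes p: "p \<le> n" and often: "\<exists>\<^sub>\<infinity>t. s t p = q"
  shows "revisits p q"
  unfolding revisits_def INFM_nat_le
proof
  fix t0
  obtain t1 where t1: "t0 \<le> t1" "s t1 p = q" using often by (auto simp: INFM_nat_le)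
  obtain t where "t1 \<le> t" "pr t = p" "\<And>u. t1 \<le> u \<Longrightarrow> u < t \<Longrightarrow> pr u \<noteq> p"
    using next_move[OF p] by blast
  moreover from this have "s t p = q" using s_unchanged[of t1 t p] t1 by simp
  ultimately show "\<exists>t\<ge>t0. pr t = p \<and> s t p = q" using t1 by (intro exI[of _ t]) simp
qed

definition occupied :: "'q \<Rightarrow> nat \<Rightarrow> bool" where
  "occupied q t \<longleftrightarrow> (\<exists>p\<in>{1..n}. s t p = q)"

definition visited :: "'q set" where "visited = {q. \<exists>t. occupied q t}"
definition inf_visited :: "'q set" where "inf_visited = {q. \<exists>\<^sub>\<infinity>t. occupied q t}"

definition first_visit :: "'q \<Rightarrow> nat" where "first_visit q = (LEAST t. occupied q t)"
definition first_visitor :: "'q \<Rightarrow> nat" where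
  "first_visitor q = (SOME p. p \<in> {1..n} \<and> s (first_visit q) p = q)"
definition last_visit :: "'q \<Rightarrow> nat" where "last_visit q = Max {t. occupied q t}"
definition last_visitor :: "'q \<Rightarrow> nat" where
  "last_visitor q = (SOME p. p \<in> {1..n} \<and> s (last_visit q) p = q)"

lemma occupied_visited: "occupied q t \<Longrightarrow> q \<in> visited"
  unfolding visited_def by blast

lemma visited_subset: "visited \<subseteq> states B"
  unfolding visited_def occupied_def using s_in_states_B by blast

lemma finite_visited: "finite visited"
  using visited_subset finite_states_B by (rule finite_subset)

lemma inf_visited_subset: "inf_visited \<subseteq> visited"
  unfolding inf_visited_def visited_def using INFM_EX by blast

lemma first_visit_le: "occupied q t \<Longrightarrow> first_visit q \<le> t"
  unfolding first_visit_def by (rule Least_le)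

lemma first_visitor_spec:
  assumes "q \<in> visited"
  shows "first_visitor q \<in> {1..n}" "s (first_visit q) (first_visitor q) = q"
proof -
  have "occupied q (first_visit q)"
    unfolding first_visit_def by (rule LeastI_ex) (use assms in \<open>simp add: visited_def\<close>)
  then have "\<exists>p. p \<in> {1..n} \<and> s (first_visit q) p = q" unfolding occupied_def by blast
  from someI_ex[OF this] show "first_visitor q \<in> {1..n}" "s (first_visit q) (first_visitor q) = q"
    unfolding first_visitor_def by blast+
qed

lemma last_visit_spec:
  assumes "q \<in> visited" "q \<notin> inf_visited"
  shows "occupied q (last_visit q)" "occupied q t \<Longrightarrow> t \<le> last_visit q"
proof -
  have "finite {t. occupied q t}" using assms(2) unfolding inf_visited_def INFM_iff_infinite by simp
  moreover have "{t. occupied q t} \<noteq> {}" using assms(1) unfolding visited_def by blast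
  ultimately show "occupied q (last_visit q)" "occupied q t \<Longrightarrow> t \<le> last_visit q"
    unfolding last_visit_def using Max_in[of "{t. occupied q t}"] Max_ge[of "{t. occupied q t}" t]
      by simp_all
qed

lemma last_visitor_spec:
  assumes "q \<in> visited" "q \<notin> inf_visited"
  shows "last_visitor q \<in> {1..n}" "s (last_visit q) (last_visitor q) = q"
proof -
  have "\<exists>p. p \<in> {1..n} \<and> s (last_visit q) p = q"
    using last_visit_spec(1)[OF assms] unfolding occupied_def by blast
  from someI_ex[OF this] show "last_visitor q \<in> {1..n}" "s (last_visit q) (last_visitor q) = q"
    unfolding last_visitor_def by blast+
qed

lemma occupied_B1: "occupied (s t 1) t"
  unfolding occupied_def using n_pos by auto

definition B1_stabilizes :: bool where "B1_stabilizes \<longleftrightarrow> (\<exists>T. \<forall>t\<ge>T. s t 1 = s T 1)"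
definition B1_stable_time :: nat where "B1_stable_time = (SOME T. \<forall>t\<ge>T. s t 1 = s T 1)"
definition B1_limit :: 'q where "B1_limit = s B1_stable_time 1"

lemma B1_stable:
  assumes "B1_stabilizes" "B1_stable_time \<le> t"
  shows "s t 1 = B1_limit"
proof -
  obtain T where "\<forall>t\<ge>T. s t 1 = s T 1" using assms(1) unfolding B1_stabilizes_def by blast
  then have "\<forall>t\<ge>B1_stable_time. s t 1 = s B1_stable_time 1"
    unfolding B1_stable_time_def by (rule someI[of "\<lambda>T. \<forall>t\<ge>T. s t 1 = s T 1"])
  then show ?thesis using assms(2) unfolding B1_limit_def by blast
qed

lemma B1_limit_inf_visited:
  assumes "B1_stabilizes"
  shows "B1_limit \<in> inf_visited"
proof -
  have "occupied B1_limit t" if "B1_stable_time \<le> t" for t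
    using occupied_B1[of t] B1_stable[OF assms that] by simp
  then have "\<forall>m. \<exists>t\<ge>m. occupied B1_limit t" by (meson max.cobounded1 max.cobounded2)
  then show ?thesis unfolding inf_visited_def INFM_nat_le by simp
qed

text \<open>A state that is occupied infinitely often and is not the limit of \<open>B\<^sub>1\<close> must be held by a
  dedicated token forever; every other visited state can eventually be released, namely once it is
  never visited again, or once \<open>B\<^sub>1\<close> has settled in it.\<close>

definition releasable :: "'q \<Rightarrow> bool" where
  "releasable q \<longleftrightarrow> q \<notin> inf_visited \<or> (B1_stabilizes \<and> q = B1_limit)"
definition release_time :: "'q \<Rightarrow> nat" where
  "release_time q = (if q \<notin> inf_visited then last_visit q else B1_stable_time)"
definition release_proc :: "'q \<Rightarrow> nat" where
  "release_proc q = (if q \<notin> inf_visited then last_visitor q else 1)"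
definition pinned :: "'q set" where "pinned = {q \<in> inf_visited. \<not> releasable q}"

lemma release_facts:
  assumes "q \<in> visited" "releasable q"
  shows "first_visit q \<le> release_time q \<and> s (release_time q) (release_proc q) = q \<and>
    release_proc q \<in> {1..n}"
proof (cases "q \<in> inf_visited")
  case False
  then show ?thesis
    using last_visit_spec[OF assms(1) False] last_visitor_spec[OF assms(1) False] first_visit_le
    unfolding release_time_def release_proc_def by simp
next
  case True
  then have "B1_stabilizes" "q = B1_limit" using assms(2) unfolding releasable_def by auto
  moreover have "occupied B1_limit B1_stable_time"
    using occupied_B1[of B1_stable_time] by (simp add: B1_limit_def)
  ultimately show ?thesis
    using True n_pos first_visit_le unfolding release_time_def release_proc_def B1_limit_def by simp
qed

text \<open>The process whose follower relieves the holder of a pinned state; \<open>B\<^sub>1\<close> is preferred,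
  which saves a token when \<open>B\<^sub>1\<close> does not stabilize.\<close>

definition pinner :: "'q \<Rightarrow> nat" where
  "pinner q = (if revisits 1 q then 1 else (SOME p. p \<in> {1..n} \<and> revisits p q))"

lemma pinner_spec:
  assumes "q \<in> inf_visited"
  shows "pinner q \<in> {1..n}" "revisits (pinner q) q"
proof -
  have "\<exists>\<^sub>\<infinity>t. \<exists>p\<in>{1..n}. s t p = q"
    using assms unfolding inf_visited_def occupied_def by (auto elim: INFM_mono)
  then obtain p where "p \<in> {1..n}" "\<exists>\<^sub>\<infinity>t. s t p = q"
    using INFM_finite_Bex_distrib[of "{1..n}" "\<lambda>p t. s t p = q"] by auto
  then have "\<exists>p. p \<in> {1..n} \<and> revisits p q" using revisitsI by auto
  from someI_ex[OF this] show "pinner q \<in> {1..n}" "revisits (pinner q) q"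
    unfolding pinner_def using n_pos by auto
qed

lemma revisits_inf_visited:
  assumes p: "p \<in> {1..n}" and "revisits p q"
  shows "q \<in> inf_visited"
proof -
  have "\<exists>\<^sub>\<infinity>t. pr t = p \<and> s t p = q" using assms(2) unfolding revisits_def .
  then have "\<exists>\<^sub>\<infinity>t. occupied q t" by (rule INFM_mono) (use p in \<open>auto simp: occupied_def\<close>)
  then show ?thesis unfolding inf_visited_def by simp
qed

definition followed :: "nat set" where "followed = pinner ` pinned"

lemma followed_range: "p \<in> followed \<Longrightarrow> p \<in> {1..n}"
  unfolding followed_def pinned_def using pinner_spec by auto

lemma pinned_visited: "pinned \<subseteq> visited"
  unfolding pinned_def using inf_visited_subset by auto

lemma two_B1_recurrent_states:
  assumes "\<not> B1_stabilizes"
  obtains q q' where "q \<noteq> q'" "revisits 1 q" "revisits 1 q'"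
proof -
  have B1: "s t 1 \<in> states B" for t using s_in_states_B n_pos by auto
  then have "\<exists>\<^sub>\<infinity>t. \<exists>q\<in>states B. s t 1 = q" by simp
  then obtain q where "\<exists>\<^sub>\<infinity>t. s t 1 = q"
    using INFM_finite_Bex_distrib[OF finite_states_B, of "\<lambda>q t. s t 1 = q"] by blast
  moreover have "\<exists>q'\<in>states B - {q}. \<exists>\<^sub>\<infinity>t. s t 1 = q'"
  proof (rule ccontr)
    assume "\<not> ?thesis"
    then have "\<forall>\<^sub>\<infinity>t. \<forall>q'\<in>states B - {q}. s t 1 \<noteq> q'"
      using MOST_finite_Ball_distrib[of "states B - {q}" "\<lambda>q' t. s t 1 \<noteq> q'"] finite_states_B
      by simp
    then have "\<forall>\<^sub>\<infinity>t. s t 1 = q" by (rule MOST_mono) (use B1 in blast)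
    then obtain T where "\<forall>t\<ge>T. s t 1 = q" by (auto simp: MOST_nat_le)
    then show False using assms unfolding B1_stabilizes_def by auto
  qed
  ultimately show thesis using that revisitsI[of 1] n_pos by blast
qed

lemma card_followed: "card followed + 1 \<le> card inf_visited"
proof -
  have fin: "finite inf_visited" using inf_visited_subset finite_visited by (rule finite_subset)
  show ?thesis
  proof (cases B1_stabilizes)
    case True
    then have "followed = pinner ` (inf_visited - {B1_limit})"
      unfolding followed_def pinned_def releasable_def by auto
    then have "card followed \<le> card (inf_visited - {B1_limit})" using fin by (simp add: card_image_le)
    then show ?thesis using card_Suc_Diff1[OF fin B1_limit_inf_visited[OF True]] by simp
  next
    case False
    then obtain q q' where qq: "q \<noteq> q'" "revisits 1 q" "revisits 1 q'"
      by (rule two_B1_recurrent_states)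
    then have "\<not> inj_on pinner inf_visited"
      using revisits_inf_visited n_pos unfolding inj_on_def pinner_def by auto
    then have "card (pinner ` inf_visited) \<noteq> card inf_visited" using eq_card_imp_inj_on fin by blast
    moreover have "card (pinner ` inf_visited) \<le> card inf_visited" using fin by (rule card_image_le)
    moreover have "followed = pinner ` inf_visited"
      using False unfolding followed_def pinned_def releasable_def by auto
    ultimately show ?thesis by simp
  qed
qed

section \<open>Tokens\<close>

definition cutoff :: nat where "cutoff = 2 * card (states B)"
definition num_pad :: nat where "num_pad = (cutoff - 1) - (card visited + card followed)"
definition slots :: "'q slot set" where
  "slots = Hold ` visited \<union> Follow ` followed \<union> Pad ` {..<num_pad}"
definition tokens :: "nat set" where "tokens = {2..cutoff}"

text \<open>This is where the cutoff \<open>2 |B|\<close> comes from: at most \<open>|B|\<close> holders and, since one infinitely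
  visited state is either the limit of \<open>B\<^sub>1\<close> or shares its follower \<open>B\<^sub>1\<close> with another one,
  fewer than \<open>|B|\<close> followers.\<close>

lemma card_visited_followed: "card visited + card followed \<le> cutoff - 1"
proof -
  have "card inf_visited \<le> card visited" using inf_visited_subset finite_visited
    by (rule card_mono[rotated])
  moreover have "card visited \<le> card (states B)" using visited_subset finite_states_B
    by (rule card_mono[rotated])
  ultimately show ?thesis using card_followed unfolding cutoff_def by linarith
qed

lemma cutoff_ge_2: "2 \<le> cutoff"
proof -
  have "card (states B) > 0" using init_B_in_states finite_states_B card_gt_0_iff by blast
  then show ?thesis by (simp add: cutoff_def)
qed

lemma finite_followed: "finite followed"
  unfolding followed_def using pinned_visited finite_visited by (blast intro: finite_subset)

lemma finite_slots: "finite slots"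
  unfolding slots_def using finite_visited finite_followed by simp

lemma card_slots: "card slots = cutoff - 1"
proof -
  let ?H = "Hold ` visited" and ?F = "Follow ` followed :: 'q slot set"
    and ?P = "Pad ` {..<num_pad} :: 'q slot set"
  have "card (?H \<union> ?F) = card ?H + card ?F"
    by (rule card_Un_disjoint) (auto simp: finite_visited finite_followed)
  moreover have "card slots = card (?H \<union> ?F) + card ?P"
    unfolding slots_def by (rule card_Un_disjoint) (auto simp: finite_visited finite_followed)
  moreover have "card ?H = card visited" "card ?F = card followed" "card ?P = num_pad"
    by (simp_all add: card_image inj_on_def)
  ultimately show ?thesis using card_visited_followed unfolding num_pad_def by simp
qed

lemma bij_tokens_slots: "\<exists>f. bij_betw f tokens slots"
proof (rule finite_same_card_bij)
  show "card tokens = card slots" using card_slots cutoff_ge_2 by (simp add: tokens_def)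
qed (simp_all add: tokens_def finite_slots)

definition slot_state :: "'q slot \<Rightarrow> nat \<Rightarrow> 'q" where
  "slot_state \<sigma> t = (case \<sigma> of
      Hold q \<Rightarrow> (if t \<le> first_visit q then s t (first_visitor q)
        else if releasable q \<and> release_time q \<le> t then s t (release_proc q) else q)
    | Follow p \<Rightarrow> s t p
    | Pad i \<Rightarrow> s t 1)"

definition slot_moves :: "'q slot \<Rightarrow> nat \<Rightarrow> bool" where
  "slot_moves \<sigma> t = (case \<sigma> of
      Hold q \<Rightarrow> (t < first_visit q \<and> pr t = first_visitor q) \<or>
        (releasable q \<and> release_time q \<le> t \<and> pr t = release_proc q)
    | Follow p \<Rightarrow> pr t = p
    | Pad i \<Rightarrow> pr t = 1)"

lemma slot_state_Hold_late:
  assumes q: "q \<in> visited" and t: "first_visit q \<le> t"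
  shows "slot_state (Hold q) t =
    (if releasable q \<and> release_time q \<le> t then s t (release_proc q) else q)"
proof (cases "t = first_visit q")
  case True
  have "s t (release_proc q) = q" if "releasable q" "release_time q \<le> t"
    using release_facts[OF q that(1)] that(2) True by (metis le_antisym)
  then show ?thesis using True first_visitor_spec[OF q] unfolding slot_state_def by auto
next
  case False
  then show ?thesis using t unfolding slot_state_def by simp
qed

lemma slot_moves_Hold_late:
  "first_visit q \<le> t \<Longrightarrow>
    slot_moves (Hold q) t \<longleftrightarrow> releasable q \<and> release_time q \<le> t \<and> pr t = release_proc q"
  unfolding slot_moves_def by auto

lemma slot_cases:
  assumes "\<sigma> \<in> slots"
  obtains (Hold) q where "\<sigma> = Hold q" "q \<in> visited"
    | (Follow) p where "\<sigma> = Follow p" "p \<in> followed"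
    | (Pad) i where "\<sigma> = Pad i"
  using assms unfolding slots_def by blast

lemma slot_state_init:
  assumes "\<sigma> \<in> slots"
  shows "slot_state \<sigma> 0 = init B"
  using assms
proof (cases rule: slot_cases)
  case (Hold q)
  then show ?thesis using first_visitor_spec[OF Hold(2)] s_init[of "first_visitor q"]
    unfolding slot_state_def by (simp add: tmpl_def)
next
  case (Follow p)
  then show ?thesis using followed_range[OF Follow(2)] s_init[of p]
    unfolding slot_state_def by (simp add: tmpl_def)
next
  case (Pad i)
  then show ?thesis using n_pos s_init[of 1] unfolding slot_state_def by (simp add: tmpl_def)
qed

lemma slot_moves_state:
  assumes "\<sigma> \<in> slots" "slot_moves \<sigma> t"
  shows "pr t \<in> {1..n} \<and> slot_state \<sigma> t = s t (pr t)"
  using assms(1)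
proof (cases rule: slot_cases)
  case (Hold q)
  show ?thesis
  proof (cases "t < first_visit q \<and> pr t = first_visitor q")
    case True
    then show ?thesis using first_visitor_spec[OF Hold(2)] Hold(1) unfolding slot_state_def by auto
  next
    case False
    then have r: "releasable q" "release_time q \<le> t" "pr t = release_proc q"
      using assms(2) Hold(1) unfolding slot_moves_def by auto
    then show ?thesis
      using release_facts[OF Hold(2) r(1)] slot_state_Hold_late[OF Hold(2), of t] Hold(1) by auto
  qed
next
  case (Follow p)
  then show ?thesis
    using assms(2) followed_range[OF Follow(2)] unfolding slot_moves_def slot_state_def by auto
next
  case (Pad i)
  then show ?thesis
    using assms(2) n_pos unfolding slot_moves_def slot_state_def by auto
qed

lemma slot_state_Suc:
  assumes "\<sigma> \<in> slots"
  shows "slot_state \<sigma> (Suc t) = (if slot_moves \<sigma> t then s (Suc t) (pr t) else slot_state \<sigma> t)"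
  using assms
proof (cases rule: slot_cases)
  case (Hold q)
  note q = Hold(2)
  show ?thesis
  proof (cases "t < first_visit q")
    case True
    then have "\<not> (releasable q \<and> release_time q \<le> t)" using release_facts[OF q] by auto
    then show ?thesis
      using True Hold(1) frame_s[of "first_visitor q" t] unfolding slot_moves_def slot_state_def
        by auto
  next
    case False
    then have late: "first_visit q \<le> t" "first_visit q \<le> Suc t" by auto
    have released_now: "s (Suc t) (release_proc q) = q"
      if "releasable q" "release_time q = Suc t" using release_facts[OF q that(1)] that(2) by simp
    show ?thesis
      unfolding Hold(1) slot_moves_Hold_late[OF late(1)] slot_state_Hold_late[OF q late(1)]
        slot_state_Hold_late[OF q late(2)]
      using frame_s[of "release_proc q" t] released_now by (auto simp: le_Suc_eq)
  qed
next
  case (Follow p)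
  then show ?thesis using frame_s[of p t] unfolding slot_moves_def slot_state_def by auto
next
  case (Pad i)
  then show ?thesis using frame_s[of 1 t] unfolding slot_moves_def slot_state_def by auto
qed

text \<open>When a followed process is about to leave a pinned state \<open>q\<close>, its follower and the holder
  of \<open>q\<close>, both in \<open>q\<close>, exchange their slots: the holder moves on as the new follower. This is
  what lets holders of pinned states move infinitely often.\<close>

definition swap_at :: "nat \<Rightarrow> bool" where
  "swap_at t \<longleftrightarrow> pr t \<in> followed \<and> s t (pr t) \<in> pinned"

definition swap :: "nat \<Rightarrow> 'q slot \<Rightarrow> 'q slot" where
  "swap t = (if swap_at t then transpose (Follow (pr t)) (Hold (s t (pr t))) else id)"

definition initial_assignment :: "nat \<Rightarrow> 'q slot" where
  "initial_assignment = (SOME f. bij_betw f tokens slots)"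

primrec assign :: "nat \<Rightarrow> nat \<Rightarrow> 'q slot" where
  "assign 0 = initial_assignment"
| "assign (Suc t) = swap t \<circ> assign t"

lemma swap_at_slots: "swap_at t \<Longrightarrow> Follow (pr t) \<in> slots \<and> Hold (s t (pr t)) \<in> slots"
  unfolding swap_at_def slots_def using pinned_visited by auto

lemma swap_in_slots: "\<sigma> \<in> slots \<Longrightarrow> swap t \<sigma> \<in> slots"
  unfolding swap_def using swap_at_slots[of t] by (auto simp: transpose_def)

lemma swap_swap [simp]: "swap t (swap t \<sigma>) = \<sigma>"
  unfolding swap_def by simp

lemma swap_other: "\<sigma> \<noteq> Follow (pr t) \<Longrightarrow> \<sigma> \<noteq> Hold (s t (pr t)) \<Longrightarrow> swap t \<sigma> = \<sigma>"
  unfolding swap_def by simp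

lemma bij_initial_assignment: "bij_betw initial_assignment tokens slots"
  unfolding initial_assignment_def using bij_tokens_slots by (rule someI_ex)

lemma assign_in_slots: "k \<in> tokens \<Longrightarrow> assign t k \<in> slots"
proof (induction t)
  case 0
  then show ?case using bij_initial_assignment by (simp add: bij_betw_apply)
next
  case (Suc t)
  then show ?case using swap_in_slots by simp
qed

lemma assign_onto_slots: "\<sigma> \<in> slots \<Longrightarrow> \<exists>k\<in>tokens. assign t k = \<sigma>"
proof (induction t arbitrary: \<sigma>)
  case 0
  then have "\<sigma> \<in> initial_assignment ` tokens" using bij_initial_assignment by (simp add: bij_betw_def)
  then show ?case by auto
next
  case (Suc t)
  have "swap t \<sigma> \<in> slots" using Suc.prems by (rule swap_in_slots)
  then obtain k where "k \<in> tokens" "assign t k = swap t \<sigma>" using Suc.IH by blast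
  then show ?case by (intro bexI[of _ k]) simp_all
qed

lemma slot_state_swap: "slot_state (swap t \<sigma>) t = slot_state \<sigma> t"
proof (cases "swap_at t")
  case True
  then have q: "s t (pr t) \<in> pinned" and "pr t \<in> {1..n}"
    using followed_range unfolding swap_at_def by auto
  then have late: "first_visit (s t (pr t)) \<le> t"
    using first_visit_le unfolding occupied_def by blast
  have "slot_state (Hold (s t (pr t))) t = s t (pr t)"
    using q pinned_visited slot_state_Hold_late[OF _ late] unfolding pinned_def by auto
  then show ?thesis using True unfolding swap_def transpose_def by (simp add: slot_state_def)
qed (simp add: swap_def)

definition tok_state :: "nat \<Rightarrow> nat \<Rightarrow> 'q" where "tok_state k t = slot_state (assign t k) t"
definition tok_moves :: "nat \<Rightarrow> nat \<Rightarrow> bool" where "tok_moves k t = slot_moves (assign (Suc t) k) t"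

lemma tok_state_assign_Suc: "tok_state k t = slot_state (assign (Suc t) k) t"
  unfolding tok_state_def by (simp add: slot_state_swap)

lemma tok_state_init: "k \<in> tokens \<Longrightarrow> tok_state k 0 = init B"
  unfolding tok_state_def by (rule slot_state_init[OF assign_in_slots])

lemma tok_state_Suc:
  assumes "k \<in> tokens"
  shows "tok_state k (Suc t) = (if tok_moves k t then s (Suc t) (pr t) else tok_state k t)"
proof -
  have "tok_state k (Suc t) = slot_state (assign (Suc t) k) (Suc t)"
    by (simp only: tok_state_def)
  also have "\<dots> = (if slot_moves (assign (Suc t) k) t then s (Suc t) (pr t)
      else slot_state (assign (Suc t) k) t)"
    by (rule slot_state_Suc[OF assign_in_slots[OF assms]])
  finally show ?thesis unfolding tok_moves_def tok_state_assign_Suc .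
qed

lemma tok_moves_state:
  assumes "k \<in> tokens" "tok_moves k t"
  shows "pr t \<in> {1..n} \<and> tok_state k t = s t (pr t)"
proof -
  have "slot_moves (assign (Suc t) k) t" using assms(2) by (simp only: tok_moves_def)
  from slot_moves_state[OF assign_in_slots[OF assms(1)] this] show ?thesis
    by (simp only: tok_state_assign_Suc)
qed

lemma assign_stays:
  assumes "t0 \<le> t1" "assign t0 k = \<sigma>" "\<And>u. t0 \<le> u \<Longrightarrow> u < t1 \<Longrightarrow> swap u \<sigma> = \<sigma>"
  shows "assign t1 k = \<sigma>"
  using assms by (induction t1 rule: dec_induct) simp_all

lemma pinned_holder_moves:
  assumes q: "q \<in> pinned" and k: "assign t0 k = Hold q"
  shows "\<exists>t\<ge>t0. tok_moves k t"
proof (rule ccontr)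
  assume still: "\<not> (\<exists>t\<ge>t0. tok_moves k t)"
  have moves_if_swapped: "tok_moves k m" if "assign m k = Hold q" "swap m (Hold q) \<noteq> Hold q" for m
  proof -
    from that(2) have "swap_at m" "q = s m (pr m)"
      unfolding swap_def transpose_def by (auto split: if_splits)
    then have "assign (Suc m) k = Follow (pr m)" using that(1) by (simp add: swap_def)
    then show ?thesis unfolding tok_moves_def slot_moves_def by simp
  qed
  have stays: "assign t k = Hold q" if "t0 \<le> t" for t
    using that
  proof (induction t rule: dec_induct)
    case (step m)
    then have "swap m (Hold q) = Hold q" using moves_if_swapped still by auto
    then show ?case using step.IH by simp
  qed (fact k)
  have "q \<in> inf_visited" using q unfolding pinned_def by simp
  then obtain t where t: "t0 \<le> t" "pr t = pinner q" "s t (pinner q) = q"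
    using pinner_spec(2) unfolding revisits_def INFM_nat_le by blast
  then have "swap_at t" using q unfolding swap_at_def followed_def by auto
  then have "swap t (Hold q) \<noteq> Hold q" using t unfolding swap_def by simp
  then show False using moves_if_swapped[OF stays[OF t(1)]] still t(1) by blast
qed

lemma pad_moves:
  assumes "assign t0 k = Pad i"
  shows "\<exists>t\<ge>t0. tok_moves k t"
proof -
  obtain t where t: "t0 \<le> t" "pr t = 1" using moves_often[OF n_pos] by (auto simp: INFM_nat_le)
  have "assign (Suc t) k = Pad i"
    using assign_stays[of t0 "Suc t" k "Pad i"] assms t(1) swap_other by simp
  then show ?thesis using t unfolding tok_moves_def slot_moves_def by auto
qed

lemma releasable_holder_moves:
  assumes q: "q \<in> visited" "releasable q" and k: "assign t0 k = Hold q"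
  shows "\<exists>t\<ge>t0. tok_moves k t"
proof -
  have rel: "first_visit q \<le> release_time q" "release_proc q \<in> {1..n}"
    using release_facts[OF q] by auto
  have "\<forall>m. \<exists>t\<ge>m. pr t = release_proc q"
    using moves_often[of "release_proc q"] rel(2) by (simp add: INFM_nat_le)
  then obtain t where t: "max t0 (release_time q) \<le> t" "pr t = release_proc q" by blast
  have "Hold q \<noteq> Hold (s u (pr u))" if "swap_at u" for u
    using that q(2) unfolding swap_at_def pinned_def by auto
  then have "swap u (Hold q) = Hold q" for u unfolding swap_def by auto
  then have "assign (Suc t) k = Hold q" using assign_stays[of t0 "Suc t" k "Hold q"] k t(1) by simp
  moreover have "slot_moves (Hold q) t"
    using slot_moves_Hold_late[of q t] rel(1) t q(2) by simp
  ultimately show ?thesis using t(1) unfolding tok_moves_def by auto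
qed

lemma follower_moves:
  assumes p: "p \<in> followed" and k: "assign t0 k = Follow p"
  shows "\<exists>t\<ge>t0. tok_moves k t"
proof -
  obtain t1 where t1: "t0 \<le> t1" "pr t1 = p" "\<And>u. t0 \<le> u \<Longrightarrow> u < t1 \<Longrightarrow> pr u \<noteq> p"
    using next_move followed_range[OF p] by auto
  have "swap u (Follow p) = Follow p" if "t0 \<le> u" "u < t1" for u
    using t1(3)[OF that] by (intro swap_other) auto
  then have "assign t1 k = Follow p" by (rule assign_stays[OF t1(1) k])
  show ?thesis
  proof (cases "swap_at t1")
    case True
    then have "assign (Suc t1) k = Hold (s t1 p)"
      using \<open>assign t1 k = Follow p\<close> t1(2) by (simp add: swap_def)
    moreover have "s t1 p \<in> pinned" using True t1(2) unfolding swap_at_def by simp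
    ultimately show ?thesis using pinned_holder_moves t1(1) by (meson le_SucI order_trans)
  next
    case False
    then have "assign (Suc t1) k = Follow p" using \<open>assign t1 k = Follow p\<close> by (simp add: swap_def)
    then show ?thesis using t1(1,2) unfolding tok_moves_def slot_moves_def by auto
  qed
qed

lemma tokens_move_often:
  assumes "k \<in> tokens"
  shows "\<exists>\<^sub>\<infinity>t. tok_moves k t"
  unfolding INFM_nat_le
proof
  fix t0
  from assign_in_slots[OF assms, of t0] show "\<exists>t\<ge>t0. tok_moves k t"
  proof (cases rule: slot_cases)
    case (Hold q)
    then show ?thesis
      using releasable_holder_moves pinned_holder_moves inf_visited_subset
      unfolding pinned_def releasable_def by blast
  qed (use pad_moves follower_moves in blast)+
qed

lemma token_of_hold:
  assumes "q \<in> visited"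
  obtains k where "k \<in> tokens" "tok_state k t = slot_state (Hold q) t"
    "tok_moves k t = slot_moves (Hold q) t"
proof -
  obtain k where "k \<in> tokens" "assign (Suc t) k = Hold q"
    using assign_onto_slots[of "Hold q" "Suc t"] assms unfolding slots_def by blast
  then show thesis using that unfolding tok_moves_def tok_state_assign_Suc by simp
qed

lemma not_released_while_occupied:
  assumes p: "p \<in> {1..n}" "p \<noteq> pr t" and fin: "s t p \<notin> inf_visited"
  shows "\<not> release_time (s t p) \<le> t"
proof -
  have occ: "occupied (s t p) (Suc t)" using frame_s[of p t] p unfolding occupied_def by auto
  then have "s t p \<in> visited" by (rule occupied_visited)
  from last_visit_spec(2)[OF this fin occ] fin show ?thesis unfolding release_time_def by simp
qed

text \<open>Every state of a process that does not move at time \<open>t\<close> is also the state of a token that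
  does not move, or of \<open>B\<^sub>1\<close>; in the last case \<open>B\<^sub>1\<close> may move, but then only along a self-loop, and
  a token is in that state as well. This is what transfers guards to the cutoff system.\<close>

lemma guard_witness:
  assumes p': "p' \<in> {1..n}" "p' \<noteq> pr t"
  shows "(\<exists>k\<in>tokens. tok_state k t = s t p' \<and> \<not> tok_moves k t) \<or>
    (pr t \<noteq> 1 \<and> s t 1 = s t p') \<or>
    (pr t = 1 \<and> s t 1 = s t p' \<and> s (Suc t) 1 = s t p' \<and> (\<exists>k\<in>tokens. tok_state k t = s t p'))"
proof -
  define q where "q = s t p'"
  have "occupied q t" unfolding q_def occupied_def using p' by blast
  then have q: "q \<in> visited" and late: "first_visit q \<le> t"
    using occupied_visited first_visit_le by auto
  obtain k where k: "k \<in> tokens" "tok_state k t = slot_state (Hold q) t"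
      "tok_moves k t = slot_moves (Hold q) t"
    using token_of_hold[OF q] by blast
  show ?thesis
  proof (cases "releasable q \<and> release_time q \<le> t")
    case False
    then have "tok_state k t = q \<and> \<not> tok_moves k t"
      using k slot_state_Hold_late[OF q late] slot_moves_Hold_late[OF late] by auto
    then show ?thesis using k(1) unfolding q_def by blast
  next
    case True
    then have "q \<in> inf_visited" using not_released_while_occupied[OF p'] unfolding q_def by blast
    then have B1: "B1_stabilizes" "q = B1_limit"
        "release_time q = B1_stable_time" "release_proc q = 1"
      using True unfolding releasable_def release_time_def release_proc_def by auto
    then have "s t 1 = q" "s (Suc t) 1 = q" using B1_stable True by auto
    moreover have "tok_state k t = s t 1" if "pr t = 1"
      using k(2) slot_state_Hold_late[OF q late] True B1 by simp
    ultimately show ?thesis using k(1) unfolding q_def by auto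
  qed
qed

section \<open>The cutoff system\<close>

definition cut_state :: "nat \<Rightarrow> nat \<Rightarrow> 'q" where
  "cut_state j t = (if j \<le> 1 then s t j else if j \<in> tokens then tok_state j t else undefined)"

definition cut_moves :: "nat \<Rightarrow> nat \<Rightarrow> bool" where
  "cut_moves t j \<longleftrightarrow> (if j \<le> 1 then pr t = j else j \<in> tokens \<and> tok_moves j t)"

definition next_move_time :: "nat \<Rightarrow> nat \<Rightarrow> nat" where
  "next_move_time k t = (LEAST u. t \<le> u \<and> tok_moves k u)"

text \<open>A token's input is the one of the process it copies at its next move, so it only changes
  when the token moves.\<close>

definition cut_input :: "nat \<Rightarrow> nat \<Rightarrow> 'a" where
  "cut_input j t = (if j \<le> 1 then e t j
     else if j \<in> tokens then e (next_move_time j t) (pr (next_move_time j t)) else undefined)"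

lemma tokens_iff: "j \<in> tokens \<longleftrightarrow> 2 \<le> j \<and> j \<le> cutoff"
  unfolding tokens_def by simp

lemma next_move_time_spec: "k \<in> tokens \<Longrightarrow> t \<le> next_move_time k t \<and> tok_moves k (next_move_time k t)"
  unfolding next_move_time_def
  by (rule LeastI_ex) (use tokens_move_often in \<open>auto simp: INFM_nat_le\<close>)

lemma next_move_time_self: "tok_moves k t \<Longrightarrow> next_move_time k t = t"
  unfolding next_move_time_def by (rule Least_equality) auto

lemma next_move_time_Suc: "\<not> tok_moves k t \<Longrightarrow> next_move_time k (Suc t) = next_move_time k t"
  unfolding next_move_time_def by (metis Suc_leD le_antisym not_less_eq_eq)

lemma cut_frame:
  assumes "\<not> cut_moves t j"
  shows "cut_state j (Suc t) = cut_state j t \<and> cut_input j (Suc t) = cut_input j t"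
  using assms frame_s[of j t] frame_e[of j t] tok_state_Suc[of j t] next_move_time_Suc[of j t]
  unfolding cut_moves_def cut_state_def cut_input_def by auto

lemma cut_moves_le: "cut_moves t j \<Longrightarrow> j \<le> cutoff"
  using cutoff_ge_2 unfolding cut_moves_def tokens_iff by (auto split: if_splits)

lemma cut_moves_often: "j \<le> cutoff \<Longrightarrow> \<exists>\<^sub>\<infinity>t. cut_moves t j"
  using moves_often[of j] n_pos tokens_move_often[of j]
  unfolding cut_moves_def tokens_iff by (cases "j \<le> 1") auto

lemma cut_init: "j \<le> cutoff \<Longrightarrow> cut_state j 0 = init (tmpl A B j)"
  using s_init[of j] n_pos tok_state_init[of j]
  unfolding cut_state_def tokens_iff by (auto simp: tmpl_def)

lemma cut_alph:
  assumes "j \<le> cutoff"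
  shows "cut_input j t \<in> alph (tmpl A B j)"
proof (cases "j \<le> 1")
  case True
  then show ?thesis using e_alph[of j t] n_pos unfolding cut_input_def by simp
next
  case False
  then have j: "j \<in> tokens" using assms tokens_iff by simp
  then have "pr (next_move_time j t) \<in> {1..n}" using next_move_time_spec tok_moves_state by blast
  then show ?thesis
    using False j e_alph[of "pr (next_move_time j t)" "next_move_time j t"]
    unfolding cut_input_def by (simp add: tmpl_def)
qed

lemma cut_mover:
  assumes "cut_moves t j"
  shows "cut_state j t = s t (pr t) \<and> cut_input j t = e t (pr t) \<and>
    cut_state j (Suc t) = s (Suc t) (pr t) \<and> tmpl A B j = tmpl A B (pr t)"
proof (cases "j \<le> 1")
  case True
  then show ?thesis using assms unfolding cut_moves_def cut_state_def cut_input_def by simp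
next
  case False
  then have j: "j \<in> tokens" "tok_moves j t" using assms unfolding cut_moves_def by auto
  then show ?thesis
    using False tok_moves_state[OF j] tok_state_Suc[OF j(1)] next_move_time_self[OF j(2)]
    unfolding cut_state_def cut_input_def by (auto simp: tmpl_def)
qed

lemma cut_covers:
  assumes j: "cut_moves t j" and p': "p' \<le> n" "p' \<noteq> pr t"
  shows "\<exists>i\<le>cutoff. i \<noteq> j \<and>
    (if cut_moves t i \<and> i < j then cut_state i (Suc t) else cut_state i t) = s t p'"
proof (cases "p' = 0")
  case True
  then have "\<not> cut_moves t 0" "j \<noteq> 0" using p'(2) j unfolding cut_moves_def tokens_iff
    by (auto split: if_splits)
  then show ?thesis using True by (intro exI[of _ 0]) (simp add: cut_state_def)
next
  case False
  then have "p' \<in> {1..n}" using p'(1) by simp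
  from guard_witness[OF this p'(2)] show ?thesis
  proof (elim disjE conjE bexE)
    fix k assume k: "k \<in> tokens" "tok_state k t = s t p'" "\<not> tok_moves k t"
    then have "\<not> cut_moves t k" "k \<le> cutoff" "2 \<le> k" using tokens_iff unfolding cut_moves_def
      by auto
    then show ?thesis using j k(1,2) by (intro exI[of _ k]) (auto simp: cut_state_def)
  next
    assume "pr t \<noteq> 1" "s t 1 = s t p'"
    then show ?thesis using j cutoff_ge_2
      by (intro exI[of _ 1]) (auto simp: cut_moves_def cut_state_def split: if_splits)
  next
    fix k assume B1: "pr t = 1" "s t 1 = s t p'" "s (Suc t) 1 = s t p'"
      and k: "k \<in> tokens" "tok_state k t = s t p'"
    show ?thesis
    proof (cases "j = 1")
      case True
      then show ?thesis using k tokens_iff by (intro exI[of _ k]) (auto simp: cut_state_def)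
    next
      case False
      then have "1 < j" using j B1(1) unfolding cut_moves_def by (auto split: if_splits)
      then show ?thesis using B1 cutoff_ge_2
        by (intro exI[of _ 1]) (simp add: cut_moves_def cut_state_def)
    qed
  qed
qed

lemma cut_guard:
  assumes j: "cut_moves t j" and g: "guard_sat n (s t) (pr t) g"
  shows "guard_sat cutoff
    (\<lambda>i. if cut_moves t i \<and> i < j then cut_state i (Suc t) else cut_state i t) j g"
proof -
  obtain p' where p': "p' \<le> n" "p' \<noteq> pr t" "s t p' \<in> g" using g unfolding guard_sat_def by auto
  obtain i where i: "i \<le> cutoff" "i \<noteq> j"
    "(if cut_moves t i \<and> i < j then cut_state i (Suc t) else cut_state i t) = s t p'"
    using cut_covers[OF j p'(1,2)] by blast
  then show ?thesis using p'(3) unfolding guard_sat_def by (intro bexI[of _ i]) simp_all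
qed

lemma batched_run_cutoff: "batched_run A B cutoff cut_state cut_input cut_moves"
proof
  fix t j assume mv: "cut_moves t j"
  obtain g where "(s t (pr t), e t (pr t), g, s (Suc t) (pr t)) \<in> trans (tmpl A B (pr t))"
    and g: "guard_sat n (s t) (pr t) g" using step_trans by blast
  then show "\<exists>g. (cut_state j t, cut_input j t, g, cut_state j (Suc t)) \<in> trans (tmpl A B j) \<and>
      guard_sat cutoff
        (\<lambda>i. if cut_moves t i \<and> i < j then cut_state i (Suc t) else cut_state i t) j g"
    using cut_mover[OF mv] cut_guard[OF mv g] by (intro exI[of _ g]) simp
next
  fix t assume "cut_moves t 0"
  then show "\<not> cut_moves t 1" by (simp add: cut_moves_def)
next
  show "1 \<le> cutoff" using cutoff_ge_2 by simp
qed (fact cut_frame cut_moves_le cut_moves_often cut_init cut_alph)+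

lemma label_cut: "label (\<lambda>j. cut_state j t) (\<lambda>j. cut_input j t) = label (s t) (e t)"
  unfolding label_def cut_state_def cut_input_def by simp

end

theorem mainTheorem7:
  fixes A B :: "('q, 'a) template" and h :: "('q, 'a) ap ltlx" and n :: nat
  assumes "wf_pair A B"
    and "n > 2 * card (states B)"
    and "E_uncond A B n h"
  shows "E_uncond A B (2 * card (states B)) h"
proof -
  obtain s e pr where run: "inf_run A B n s e pr" "uncond_fair n pr"
    and h: "ltlx_sem (\<lambda>t. label (s t) (e t)) h"
    using assms(3) unfolding E_uncond_def by blast
  interpret fair_run A B n s e pr
    using assms(1,2) run by unfold_locales simp_all
  obtain s' e' pr' \<psi> where run': "inf_run A B cutoff s' e' pr'" "uncond_fair cutoff pr'"
    and "stutter_sampling \<psi> (\<lambda>t. label (s t) (e t)) (\<lambda>i. label (s' i) (e' i))"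
    using batched_run.sequential_run[OF batched_run_cutoff] label_cut by auto
  then have "ltlx_sem (\<lambda>i. label (s' i) (e' i)) h" using h ltlx_sem_stutter_sampling by blast
  then show ?thesis using run' unfolding E_uncond_def cutoff_def by blast
qed

end
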